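(* Let $(\Omega,\mathcal F,\mathbb P)$ be a probability space, $1\le p<+\infty$, $q$ with $1/p+1/q=1$, $\mathbb X=\mathbb R^{n}$ with the Euclidean scalar product $\langle\cdot,\cdot\rangle$, $\mathbb U=\mathbb R^{m}$, $\mathbb W=\mathbb R^{k}$, $\mathbb Y=L^p(\Omega,\mathcal F,\mathbb P;\mathbb R^{n})$ and $\mathbb Y^\sharp=L^q(\Omega,\mathcal F,\mathbb P;\mathbb R^{n})$. Let $T\ge1$ be an integer, $(\mathbf W_t)_{t=1,\dots,T}$ random variables with values in $\mathbb W$, and for $t=0,\dots,T-1$ let $f_t:\mathbb X\times\mathbb U\times\mathbb W\to\mathbb X$ and $L_t:\mathbb X\times\mathbb U\times\mathbb W\to[0,+\infty]$, and $\Phi:\mathbb X\to[0,+\infty]$ be given. Assume: (a) for all $(x,u)$, $f_t(x,u,\mathbf W_{t+1})\in\mathbb Y$; (b) the $L_t$ and $\Phi$ are nonnegative measurable functions. Define the Bellman functions $V_T=\Phi$ and, for $t=T-1,\dots,0$, $V_t(x)=\inf\mathbb E\big[\sum_{s=t}^{T-1}L_s(\mathbf X_s,\mathbf U_s,\mathbf W_{s+1})\mathbin{\overset{\cdot}{+}}\Phi(\mathbf X_T)\big]$, the infimum being over processes with $\mathbf X_t=x$, $\mathbf X_{s+1}=f_s(\mathbf X_s,\mathbf U_s,\mathbf W_{s+1})$ and $\sigma(\mathbf U_s)\subset\sigma(\mathbf X_s)$ for $s=t,\dots,T-1$. Assume moreover that the $V_t$ are measurable and satisfy the Bellman equation $V_t(x)=\inf_{u\in\mathbb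 U}\mathbb E\big[L_t(x,u,\mathbf W_{t+1})\mathbin{\overset{\cdot}{+}} V_{t+1}(f_t(x,u,\mathbf W_{t+1}))\big]$ for $t=T-1,\dots,0$ and all $x$. Define the Hamiltonian $H(x,u,\mathbf X^\sharp)=\mathbb E\big[L_t(x,u,\mathbf W_{t+1})\mathbin{\overset{\cdot}{+}}\langle f_t(x,u,\mathbf W_{t+1}),\mathbf X^\sharp\rangle\big]$ for $(x,u,\mathbf X^\sharp)\in\mathbb X\times\mathbb U\times\mathbb Y^\sharp$. Then for all $t=T-1,\dots,0$ and $x\in\mathbb X$, $$V_t(x)=\inf_{\mathbf X\in\mathbb Y}\Big(\inf_{u\in\mathbb U}\ \sup_{\mathbf X^\sharp\in\mathbb Y^\sharp}\big(\mathbb E[\langle-\mathbf X,\mathbf X^\sharp\rangle]\mathbin{\underset{\cdot}{+}} H(x,u,\mathbf X^\sharp)\big)\mathbin{\overset{\cdot}{+}}\mathbb E[V_{t+1}(\mathbf X)]\Big),$$ and, writing $V_t^\star(x^\sharp)=\sup_{x\in\mathbb X}\big(\langle x,x^\sharp\rangle\mathbin{\underset{\cdot}{+}}(-V_t(x))\big)$, for all $t=T-1,\dots,0$ and $x^\sharp\in\mathbb R^{n}$, $$V_t^\star(x^\sharp)\le\inf_{\mathbf X^\sharp\in\mathbb Y^\sharp}\Big(\sup_{u\in\mathbb U}\ \sup_{x\in\mathbb X}\big(\langle x,x^\sharp\rangle\mathbin{\underset{\cdot}{+}}(-H(x,u,\mathbf X^\sharp))\big)\mathbin{\overset{\cdot}{+}}\mathbb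 E\big[V_{t+1}^\star(\mathbf X^\sharp)\big]\Big).$$
   Context: $\overline{\mathbb R}=[-\infty,+\infty]$. The Moreau lower addition $\mathbin{\underset{\cdot}{+}}$ is usual addition extended by $(+\infty)\mathbin{\underset{\cdot}{+}}(-\infty)=(-\infty)\mathbin{\underset{\cdot}{+}}(+\infty)=-\infty$; the Moreau upper addition $\mathbin{\overset{\cdot}{+}}$ is usual addition extended by $(+\infty)\mathbin{\overset{\cdot}{+}}(-\infty)=(-\infty)\mathbin{\overset{\cdot}{+}}(+\infty)=+\infty$. The Hamiltonian $H$ depends on $t$ (through $L_t,f_t$); in each displayed formula for index $t$ it is the one built from $L_t,f_t$. $\mathbb E[V_{t+1}^\star(\mathbf X^\sharp)]$ denotes the expectation of the random variable $\omega\mapsto V_{t+1}^\star(\mathbf X^\sharp(\omega))$. *)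

theory Defs
  imports "HOL-Probability.Probability"
begin

text \<open>Moreau upper addition (Isabelle's ereal addition already is upper addition:
  inf + -inf = inf); we define it explicitly for readability.\<close>
definition upper_add :: "ereal \<Rightarrow> ereal \<Rightarrow> ereal" (infixl "+\<^sup>u" 65) where
  "upper_add a b = (if (a = \<infinity> \<and> b = -\<infinity>) \<or> (a = -\<infinity> \<and> b = \<infinity>) then \<infinity> else a + b)"

definition lower_add :: "ereal \<Rightarrow> ereal \<Rightarrow> ereal" (infixl "+\<^sub>l" 65) where
  "lower_add a b = (if (a = \<infinity> \<and> b = -\<infinity>) \<or> (a = -\<infinity> \<and> b = \<infinity>) then -\<infinity> else a + b)"

text \<open>Expectation of an extended-real random variable:
  E[Z] = E[Z+] (upper +) (- E[Z-]), i.e. with the convention +inf - inf = +inf.\<close>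
definition Eexp :: "'a measure \<Rightarrow> ('a \<Rightarrow> ereal) \<Rightarrow> ereal" where
  "Eexp M Z = upper_add (enn2ereal (\<integral>\<^sup>+ w. e2ennreal (Z w) \<partial>M))
                        (- enn2ereal (\<integral>\<^sup>+ w. e2ennreal (- Z w) \<partial>M))"

definition in_Lp :: "real \<Rightarrow> 'a measure \<Rightarrow> ('a \<Rightarrow> real^'n) \<Rightarrow> bool" where
  "in_Lp p M X \<longleftrightarrow> X \<in> borel_measurable M \<and> integrable M (\<lambda>w. norm (X w) powr p)"

definition in_Linf :: "'a measure \<Rightarrow> ('a \<Rightarrow> real^'n) \<Rightarrow> bool" where
  "in_Linf M X \<longleftrightarrow> X \<in> borel_measurable M \<and> (\<exists>C. AE w in M. norm (X w) \<le> C)"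

definition in_Lconj :: "real \<Rightarrow> 'a measure \<Rightarrow> ('a \<Rightarrow> real^'n) \<Rightarrow> bool" where
  "in_Lconj p M X \<longleftrightarrow> (if p = 1 then in_Linf M X else in_Lp (p / (p - 1)) M X)"

definition admissible ::
  "'a measure \<Rightarrow> nat \<Rightarrow> (nat \<Rightarrow> real^'n \<Rightarrow> real^'m \<Rightarrow> real^'k \<Rightarrow> real^'n)
   \<Rightarrow> (nat \<Rightarrow> 'a \<Rightarrow> real^'k) \<Rightarrow> nat \<Rightarrow> real^'n
   \<Rightarrow> ((nat \<Rightarrow> 'a \<Rightarrow> real^'n) \<times> (nat \<Rightarrow> 'a \<Rightarrow> real^'m)) set" where
  "admissible M T f W t x =
     {(X, U). (\<forall>w\<in>space M. X t w = x)
        \<and> (\<forall>s\<in>{t..<T}. \<forall>w\<in>space M. X (Suc s) w = f s (X s w) (U s w) (W (Suc s) w))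
        \<and> (\<forall>s\<in>{t..<T}. U s \<in> measurable (vimage_algebra (space M) (X s) borel) borel)}"

definition Ham ::
  "'a measure \<Rightarrow> (nat \<Rightarrow> real^'n \<Rightarrow> real^'m \<Rightarrow> real^'k \<Rightarrow> ereal)
   \<Rightarrow> (nat \<Rightarrow> real^'n \<Rightarrow> real^'m \<Rightarrow> real^'k \<Rightarrow> real^'n)
   \<Rightarrow> (nat \<Rightarrow> 'a \<Rightarrow> real^'k) \<Rightarrow> nat \<Rightarrow> real^'n \<Rightarrow> real^'m \<Rightarrow> ('a \<Rightarrow> real^'n) \<Rightarrow> ereal" where
  "Ham M L f W t x u Xs =
     Eexp M (\<lambda>w. upper_add (L t x u (W (Suc t) w)) (ereal (inner (f t x u (W (Suc t) w)) (Xs w))))"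

definition fconj :: "(real^'n \<Rightarrow> ereal) \<Rightarrow> real^'n \<Rightarrow> ereal" where
  "fconj V xs = (SUP x. lower_add (ereal (inner x xs)) (- V x))"

end

(*
  The Hamiltonian splits as H(x, u, X#) = E[L_t] + E<f_t(x, u, W_{t+1}), X#>. Hence the
  supremum over multipliers X# in L^q of E<-X, X#> + H(x, u, X#) is E[L_t] plus the
  indicator (0 or +inf) of the constraint X = f_t(x, u, W_{t+1}) a.s.: a bounded multiplier
  pointing along f_t - X detects any violation. Minimising over X in L^p then just gives back
  the Bellman equation. The inequality for the conjugates is weak duality: integrating the
  Fenchel-Young inequality <y, y#> - V_{t+1}(y) <= V_{t+1}*(y#) at y = f_t, y# = X# splits
  <x, x#> - E[L_t + V_{t+1}(f_t)] into (<x, x#> - H(x, u, X#)) + E[V_{t+1}*(X#)].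
*)

theory Submission
  imports Defs
begin

lemma upper_add_eq_plus: "upper_add a b = a + b"
  by (cases a; cases b) (auto simp: upper_add_def)

lemma lower_add_ereal_left: "lower_add (ereal r) b = ereal r + b"
  by (cases b) (auto simp: lower_add_def)

lemma Eexp_cong_AE:
  assumes "AE w in M. Z w = Z' w"
  shows "Eexp M Z = Eexp M Z'"
proof -
  have "(\<integral>\<^sup>+ w. e2ennreal (Z w) \<partial>M) = (\<integral>\<^sup>+ w. e2ennreal (Z' w) \<partial>M)"
    "(\<integral>\<^sup>+ w. e2ennreal (- Z w) \<partial>M) = (\<integral>\<^sup>+ w. e2ennreal (- Z' w) \<partial>M)"
    using assms by (auto intro!: nn_integral_cong_AE)
  then show ?thesis by (simp add: Eexp_def)
qed

lemma Eexp_eq_nn_integral: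
  assumes "\<And>w. w \<in> space M \<Longrightarrow> 0 \<le> Z w"
  shows "Eexp M Z = enn2ereal (\<integral>\<^sup>+ w. e2ennreal (Z w) \<partial>M)"
proof -
  have "(\<integral>\<^sup>+ w. e2ennreal (- Z w) \<partial>M) = 0"
    using assms by (simp add: nn_integral_cong[where v = "\<lambda>_. 0"] e2ennreal_neg)
  then show ?thesis by (simp add: Eexp_def upper_add_eq_plus zero_ennreal.rep_eq)
qed

lemma Eexp_nonneg:
  assumes "\<And>w. w \<in> space M \<Longrightarrow> 0 \<le> Z w"
  shows "0 \<le> Eexp M Z"
  by (simp add: Eexp_eq_nn_integral[OF assms])

lemma Eexp_mono:
  assumes "\<And>w. w \<in> space M \<Longrightarrow> Z w \<le> Z' w"
  shows "Eexp M Z \<le> Eexp M Z'"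
proof -
  have "(\<integral>\<^sup>+ w. e2ennreal (Z w) \<partial>M) \<le> (\<integral>\<^sup>+ w. e2ennreal (Z' w) \<partial>M)"
    "(\<integral>\<^sup>+ w. e2ennreal (- Z' w) \<partial>M) \<le> (\<integral>\<^sup>+ w. e2ennreal (- Z w) \<partial>M)"
    using assms by (auto intro!: nn_integral_mono e2ennreal_mono)
  then show ?thesis
    unfolding Eexp_def upper_add_eq_plus by (intro add_mono) (auto simp: less_eq_ennreal.rep_eq)
qed

lemma enn2ereal_eq_ereal_enn2real: "x < \<infinity> \<Longrightarrow> enn2ereal x = ereal (enn2real x)"
  by (cases x rule: ennreal_cases) auto

lemma Eexp_eq_integral:
  assumes g: "integrable M g" and Z: "AE w in M. Z w = ereal (g w)"
  shows "Eexp M Z = ereal (\<integral>w. g w \<partial>M)"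
proof -
  have pos: "(\<integral>\<^sup>+ w. e2ennreal (Z w) \<partial>M) = (\<integral>\<^sup>+ w. ennreal (g w) \<partial>M)"
    and neg: "(\<integral>\<^sup>+ w. e2ennreal (- Z w) \<partial>M) = (\<integral>\<^sup>+ w. ennreal (- g w) \<partial>M)"
    using Z by (auto intro!: nn_integral_cong_AE)
  have "(\<integral>\<^sup>+ w. ennreal (g w) \<partial>M) < \<infinity>" "(\<integral>\<^sup>+ w. ennreal (- g w) \<partial>M) < \<infinity>"
    using integrableD(2,3)[OF g] by (simp_all add: less_top)
  then show ?thesis
    unfolding Eexp_def upper_add_eq_plus pos neg real_lebesgue_integral_def[OF g]
    by (simp add: enn2ereal_eq_ereal_enn2real)
qed

lemma Eexp_finite_imp_integrable:
  assumes Z: "Z \<in> borel_measurable M" "\<And>w. w \<in> space M \<Longrightarrow> 0 \<le> Z w"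
    and fin: "Eexp M Z \<noteq> \<infinity>"
  obtains g where "integrable M g" "AE w in M. Z w = ereal (g w)" "Eexp M Z = ereal (\<integral>w. g w \<partial>M)"
proof -
  define g where "g w = real_of_ereal (Z w)" for w
  have "(\<integral>\<^sup>+ w. e2ennreal (Z w) \<partial>M) \<noteq> \<infinity>"
    using fin by (simp add: Eexp_eq_nn_integral[OF Z(2)])
  then have "AE w in M. e2ennreal (Z w) \<noteq> \<infinity>"
    using Z by (intro nn_integral_noteq_infinite) auto
  then have ae: "AE w in M. Z w = ereal (g w)"
    using AE_space
  proof eventually_elim
    case (elim w)
    with Z(2)[of w] show ?case by (cases "Z w") (auto simp: g_def e2ennreal_infty)
  qed
  have "AE w in M. ennreal (norm (g w)) = e2ennreal (Z w)"
    using ae AE_space by eventually_elim (use Z(2) in force)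
  then have "(\<integral>\<^sup>+ w. ennreal (norm (g w)) \<partial>M) = (\<integral>\<^sup>+ w. e2ennreal (Z w) \<partial>M)"
    by (rule nn_integral_cong_AE)
  moreover have "g \<in> borel_measurable M"
    unfolding g_def using Z(1) by measurable
  ultimately have g: "integrable M g"
    using fin by (intro integrableI_bounded) (auto simp: Eexp_eq_nn_integral[OF Z(2)] less_top)
  then show ?thesis
    using ae that by (simp add: Eexp_cong_AE[OF ae] Eexp_eq_integral)
qed

lemma Eexp_add_nonneg:
  assumes "Z \<in> borel_measurable M" "\<And>w. w \<in> space M \<Longrightarrow> 0 \<le> Z w"
    and "Z' \<in> borel_measurable M" "\<And>w. w \<in> space M \<Longrightarrow> 0 \<le> Z' w"
  shows "Eexp M (\<lambda>w. Z w + Z' w) = Eexp M Z + Eexp M Z'"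
proof -
  have "(\<integral>\<^sup>+ w. e2ennreal (Z w + Z' w) \<partial>M) = (\<integral>\<^sup>+ w. e2ennreal (Z w) + e2ennreal (Z' w) \<partial>M)"
    using assms by (intro nn_integral_cong) (simp add: plus_ennreal.abs_eq eq_onp_def)
  also have "\<dots> = (\<integral>\<^sup>+ w. e2ennreal (Z w) \<partial>M) + (\<integral>\<^sup>+ w. e2ennreal (Z' w) \<partial>M)"
    using assms by (intro nn_integral_add) auto
  finally show ?thesis
    using assms by (simp add: Eexp_eq_nn_integral add_nonneg_nonneg plus_ennreal.rep_eq)
qed

lemma e2ennreal_le_plus_abs: "0 \<le> z \<Longrightarrow> e2ennreal z \<le> e2ennreal (ereal g + z) + ennreal \<bar>g\<bar>"
proof (cases z)
  case (real r)
  assume "0 \<le> z"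
  then have "ennreal r \<le> ennreal (max 0 (g + r) + \<bar>g\<bar>)"
    using real by (intro ennreal_leI) auto
  also have "\<dots> = ennreal (g + r) + ennreal \<bar>g\<bar>"
    by (simp add: ennreal_plus ennreal_max_0)
  finally show ?thesis using real by simp
qed (auto simp: e2ennreal_infty)

lemma Eexp_integrable_add:
  assumes g: "integrable M g" and Z: "Z \<in> borel_measurable M" "\<And>w. w \<in> space M \<Longrightarrow> 0 \<le> Z w"
  shows "Eexp M (\<lambda>w. ereal (g w) + Z w) = ereal (\<integral>w. g w \<partial>M) + Eexp M Z"
proof (cases "Eexp M Z = \<infinity>")
  case False
  then obtain r where r: "integrable M r" "AE w in M. Z w = ereal (r w)"
    "Eexp M Z = ereal (\<integral>w. r w \<partial>M)"
    using Eexp_finite_imp_integrable[OF Z] by blast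
  then have "Eexp M (\<lambda>w. ereal (g w) + Z w) = ereal (\<integral>w. g w + r w \<partial>M)"
    using g by (intro Eexp_eq_integral) auto
  then show ?thesis using g r by simp
next
  case True
  then have "\<infinity> = (\<integral>\<^sup>+ w. e2ennreal (Z w) \<partial>M)"
    by (simp add: Eexp_eq_nn_integral[OF Z(2)])
  also have "\<dots>
      \<le> (\<integral>\<^sup>+ w. e2ennreal (ereal (g w) + Z w) + ennreal \<bar>g w\<bar> \<partial>M)"
    using Z(2) by (intro nn_integral_mono e2ennreal_le_plus_abs)
  also have "\<dots> = (\<integral>\<^sup>+ w. e2ennreal (ereal (g w) + Z w) \<partial>M) + (\<integral>\<^sup>+ w. ennreal \<bar>g w\<bar> \<partial>M)"
    using g Z(1) by (intro nn_integral_add) auto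
  finally have "(\<integral>\<^sup>+ w. e2ennreal (ereal (g w) + Z w) \<partial>M) = \<infinity>"
    using g by (auto simp: integrable_iff_bounded top_unique ennreal_add_eq_top)
  then show ?thesis
    using True by (simp add: Eexp_def upper_add_eq_plus)
qed

lemma Eexp_integrable_diff:
  assumes g: "integrable M g" and Z: "Z \<in> borel_measurable M" "\<And>w. w \<in> space M \<Longrightarrow> 0 \<le> Z w"
    and fin: "Eexp M Z \<noteq> \<infinity>"
  shows "Eexp M (\<lambda>w. ereal (g w) - Z w) = ereal (\<integral>w. g w \<partial>M) - Eexp M Z"
proof -
  obtain r where r: "integrable M r" "AE w in M. Z w = ereal (r w)"
    "Eexp M Z = ereal (\<integral>w. r w \<partial>M)"
    using Eexp_finite_imp_integrable[OF Z fin] by blast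
  then have "Eexp M (\<lambda>w. ereal (g w) - Z w) = ereal (\<integral>w. g w - r w \<partial>M)"
    using g by (intro Eexp_eq_integral) auto
  then show ?thesis using g r by simp
qed

lemma in_Lp_integrable_norm:
  assumes M: "finite_measure M" and p: "1 \<le> p" and X: "in_Lp p M X"
  shows "integrable M (\<lambda>w. norm (X w))"
proof (rule Bochner_Integration.integrable_bound)
  show "integrable M (\<lambda>w. 1 + norm (X w) powr p)"
    using M X by (auto simp: in_Lp_def finite_measure.integrable_const)
  have "norm (X w) \<le> 1 + norm (X w) powr p" for w
  proof (cases "norm (X w) \<le> 1")
    case False
    then have "norm (X w) powr 1 \<le> norm (X w) powr p"
      using p by (intro powr_mono) auto
    then show ?thesis using False by simp
  qed (simp add: add_increasing2)
  then show "AE w in M. norm (norm (X w)) \<le> norm (1 + norm (X w) powr p)"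
    by (auto simp: add_nonneg_nonneg)
qed (use X in \<open>auto simp: in_Lp_def intro!: borel_measurable_norm\<close>)

lemma in_Lconj_integrable_inner:
  assumes M: "finite_measure M" and p: "1 \<le> p" and X: "in_Lp p M X" and Xs: "in_Lconj p M Xs"
  shows "integrable M (\<lambda>w. X w \<bullet> Xs w)"
proof (cases "p = 1")
  case True
  then obtain C where C: "AE w in M. norm (Xs w) \<le> C" and Xs_meas: "Xs \<in> borel_measurable M"
    using Xs by (auto simp: in_Lconj_def in_Linf_def)
  show ?thesis
  proof (rule Bochner_Integration.integrable_bound)
    show "integrable M (\<lambda>w. C * norm (X w))"
      using in_Lp_integrable_norm[OF M p X] by simp
    show "AE w in M. norm (X w \<bullet> Xs w) \<le> norm (C * norm (X w))"
      using C
    proof eventually_elim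
      case (elim w)
      have "\<bar>X w \<bullet> Xs w\<bar> \<le> norm (X w) * norm (Xs w)" by (rule Cauchy_Schwarz_ineq2)
      also have "\<dots> \<le> norm (X w) * \<bar>C\<bar>" using elim by (intro mult_left_mono) auto
      finally show ?case by (simp add: abs_mult mult.commute)
    qed
  qed (use X Xs_meas in \<open>auto simp: in_Lp_def\<close>)
next
  case False
  define q where "q = p / (p - 1)"
  have p1: "1 < p" using p False by simp
  have q1: "1 < q" and pq: "1 / p + 1 / q = 1"
    using p1 by (simp_all add: q_def field_simps)
  have Xs': "in_Lp q M Xs" using Xs False by (simp add: in_Lconj_def q_def)
  show ?thesis
  proof (rule Bochner_Integration.integrable_bound)
    show "integrable M (\<lambda>w. norm (X w) powr p / p + norm (Xs w) powr q / q)"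
      using X Xs' by (auto simp: in_Lp_def)
    have "\<bar>X w \<bullet> Xs w\<bar> \<le> norm (X w) powr p / p + norm (Xs w) powr q / q" for w
      using Cauchy_Schwarz_ineq2 Youngs_inequality[OF p1 q1 pq, of "norm (X w)" "norm (Xs w)"]
      by (smt (verit) norm_ge_zero)
    then show "AE w in M. norm (X w \<bullet> Xs w) \<le> norm (norm (X w) powr p / p + norm (Xs w) powr q / q)"
      by (auto intro!: AE_I2 intro: order_trans[OF _ abs_ge_self])
  qed (use X Xs' in \<open>auto simp: in_Lp_def\<close>)
qed

lemma in_Lconj_bounded:
  assumes M: "finite_measure M" and p: "1 \<le> p"
    and Xs: "Xs \<in> borel_measurable M" "\<And>w. norm (Xs w) \<le> C"
  shows "in_Lconj p M Xs"
proof (cases "p = 1")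
  case False
  have "integrable M (\<lambda>w. norm (Xs w) powr (p / (p - 1)))"
  proof (rule finite_measure.integrable_const_bound[OF M])
    show "AE w in M. norm (norm (Xs w) powr (p / (p - 1))) \<le> C powr (p / (p - 1))"
      using Xs(2) p by (auto intro!: powr_mono2)
  qed (use Xs(1) in measurable)
  then show ?thesis using False Xs(1) by (simp add: in_Lconj_def in_Lp_def)
qed (use Xs in \<open>auto simp: in_Lconj_def in_Linf_def\<close>)

lemma SUP_Lconj_integral_inner:
  assumes M: "finite_measure M" and p: "1 \<le> p"
    and Y: "Y \<in> borel_measurable M" "integrable M (\<lambda>w. norm (Y w))"
  shows "(SUP Xs \<in> {Xs. in_Lconj p M Xs}. ereal (\<integral>w. Y w \<bullet> Xs w \<partial>M))
    = (if AE w in M. Y w = 0 then 0 else \<infinity>)"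
proof (cases "AE w in M. Y w = 0")
  case True
  then have "(\<integral>w. Y w \<bullet> Xs w \<partial>M) = 0" for Xs
    by (intro integral_eq_zero_AE) auto
  moreover have "in_Lconj p M (\<lambda>w. 0)"
    by (rule in_Lconj_bounded[OF M p]) auto
  ultimately show ?thesis
    using True by (simp flip: zero_ereal_def) (subst SUP_const; auto)
next
  case False
  \<comment> \<open>\<open>k\<close> is bounded, hence a multiplier in every \<open>L\<^sup>q\<close>, and \<open>Y \<bullet> k > 0\<close> wherever \<open>Y \<noteq> 0\<close>\<close>
  define k where "k w = (1 / (1 + norm (Y w))) *\<^sub>R Y w" for w
  define h where "h w = Y w \<bullet> k w" for w
  have k: "k \<in> borel_measurable M" "norm (k w) \<le> 1" for w
    unfolding k_def using Y(1) by (measurable, simp add: divide_le_eq_1 add_pos_nonneg)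
  have h_eq: "h w = (norm (Y w))\<^sup>2 / (1 + norm (Y w))" for w
    by (simp add: h_def k_def power2_norm_eq_inner)
  have h_bounds: "0 \<le> h w" "h w \<le> norm (Y w)" for w
    by (auto simp: h_eq divide_le_eq power2_eq_square add_pos_nonneg distrib_left)
  have h_int: "integrable M h"
  proof (rule Bochner_Integration.integrable_bound[OF Y(2)])
    show "h \<in> borel_measurable M" unfolding h_def using Y(1) k(1) by measurable
  qed (use h_bounds in auto)
  have "AE w in M. Y w = 0" if "(\<integral>w. h w \<partial>M) = 0"
  proof -
    have "AE w in M. h w = 0"
      using that integral_nonneg_eq_0_iff_AE[OF h_int] h_bounds(1) by auto
    then show ?thesis
      by eventually_elim (simp add: h_eq add_nonneg_eq_0_iff)
  qed
  moreover have "0 \<le> (\<integral>w. h w \<partial>M)"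
    using h_bounds(1) by simp
  ultimately have h_pos: "0 < (\<integral>w. h w \<partial>M)"
    using False by (auto simp: order.strict_iff_order)
  have "ereal B \<le> (SUP Xs \<in> {Xs. in_Lconj p M Xs}. ereal (\<integral>w. Y w \<bullet> Xs w \<partial>M))" for B
  proof -
    define c where "c = max 0 B / (\<integral>w. h w \<partial>M)"
    have c: "0 \<le> c" using h_pos by (simp add: c_def)
    have "in_Lconj p M (\<lambda>w. c *\<^sub>R k w)"
      using k c by (intro in_Lconj_bounded[OF M p, where C = c]) (auto simp: mult_left_le)
    moreover have "(\<integral>w. Y w \<bullet> (c *\<^sub>R k w) \<partial>M) = max 0 B"
      using h_pos by (simp add: h_def[symmetric] c_def)
    ultimately show ?thesis
      by (intro SUP_upper2[where i = "\<lambda>w. c *\<^sub>R k w"]) auto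
  qed
  then show ?thesis
    using False by (auto intro: ereal_top)
qed

lemma Eexp_cost_plus_inner:
  assumes M: "finite_measure M" and p: "1 \<le> p" and F: "in_Lp p M F" and Xs: "in_Lconj p M Xs"
    and L: "L \<in> borel_measurable M" "\<And>w. w \<in> space M \<Longrightarrow> 0 \<le> L w"
  shows "Eexp M (\<lambda>w. upper_add (L w) (ereal (F w \<bullet> Xs w))) = ereal (\<integral>w. F w \<bullet> Xs w \<partial>M) + Eexp M L"
  unfolding upper_add_eq_plus add.commute[of "L _"]
  by (rule Eexp_integrable_add[OF in_Lconj_integrable_inner[OF M p F Xs] L])

lemma SUP_Lconj_penalty:
  assumes M: "finite_measure M" and p: "1 \<le> p" and F: "in_Lp p M F" and X: "in_Lp p M X"
    and L: "L \<in> borel_measurable M" "\<And>w. w \<in> space M \<Longrightarrow> 0 \<le> L w"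
  shows "(SUP Xs \<in> {Xs. in_Lconj p M Xs}.
      lower_add (Eexp M (\<lambda>w. ereal (- X w \<bullet> Xs w))) (Eexp M (\<lambda>w. upper_add (L w) (ereal (F w \<bullet> Xs w)))))
    = Eexp M L + (if AE w in M. X w = F w then 0 else \<infinity>)"
proof -
  define Y where "Y w = F w - X w" for w
  have Y_meas: "Y \<in> borel_measurable M"
    using F X unfolding Y_def in_Lp_def by auto
  have Y_int: "integrable M (\<lambda>w. norm (Y w))"
  proof (rule Bochner_Integration.integrable_bound)
    show "integrable M (\<lambda>w. norm (F w) + norm (X w))"
      using in_Lp_integrable_norm[OF M p F] in_Lp_integrable_norm[OF M p X] by simp
    show "AE w in M. norm (norm (Y w)) \<le> norm (norm (F w) + norm (X w))"
      by (simp add: Y_def norm_triangle_ineq4)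
  qed (use Y_meas in measurable)
  have "lower_add (Eexp M (\<lambda>w. ereal (- X w \<bullet> Xs w))) (Eexp M (\<lambda>w. upper_add (L w) (ereal (F w \<bullet> Xs w))))
      = ereal (\<integral>w. Y w \<bullet> Xs w \<partial>M) + Eexp M L"
    if Xs: "in_Lconj p M Xs" for Xs
  proof -
    have iX: "integrable M (\<lambda>w. X w \<bullet> Xs w)" and iF: "integrable M (\<lambda>w. F w \<bullet> Xs w)"
      using in_Lconj_integrable_inner[OF M p _ Xs] X F by auto
    have "Eexp M (\<lambda>w. ereal (- X w \<bullet> Xs w)) = ereal (\<integral>w. - X w \<bullet> Xs w \<partial>M)"
      using iX by (intro Eexp_eq_integral) auto
    moreover have "Eexp M (\<lambda>w. upper_add (L w) (ereal (F w \<bullet> Xs w))) = ereal (\<integral>w. F w \<bullet> Xs w \<partial>M) + Eexp M L"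
      by (rule Eexp_cost_plus_inner[OF M p F Xs L])
    moreover have "(\<integral>w. Y w \<bullet> Xs w \<partial>M) = (\<integral>w. - X w \<bullet> Xs w \<partial>M) + (\<integral>w. F w \<bullet> Xs w \<partial>M)"
      using iX iF by (simp add: Y_def inner_diff_left)
    ultimately show ?thesis
      by (simp add: lower_add_ereal_left upper_add_eq_plus flip: add.assoc)
  qed
  then have "(SUP Xs \<in> {Xs. in_Lconj p M Xs}.
      lower_add (Eexp M (\<lambda>w. ereal (- X w \<bullet> Xs w))) (Eexp M (\<lambda>w. upper_add (L w) (ereal (F w \<bullet> Xs w)))))
    = (SUP Xs \<in> {Xs. in_Lconj p M Xs}. ereal (\<integral>w. Y w \<bullet> Xs w \<partial>M) + Eexp M L)"
    by (intro SUP_cong) auto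
  also have "\<dots> = (SUP Xs \<in> {Xs. in_Lconj p M Xs}. ereal (\<integral>w. Y w \<bullet> Xs w \<partial>M)) + Eexp M L"
  proof (rule SUP_ereal_add_left)
    show "{Xs. in_Lconj p M Xs} \<noteq> {}"
      using in_Lconj_bounded[OF M p, of "\<lambda>w. 0" 0] by auto
    show "Eexp M L \<noteq> - \<infinity>"
      using Eexp_nonneg[of M L] L(2) by auto
  qed
  also have "\<dots> = Eexp M L + (if AE w in M. X w = F w then 0 else \<infinity>)"
  proof -
    have "(AE w in M. Y w = 0) \<longleftrightarrow> (AE w in M. X w = F w)"
      by (simp add: Y_def eq_commute[of "F _"])
    then show ?thesis
      by (simp add: SUP_Lconj_integral_inner[OF M p Y_meas Y_int] add.commute)
  qed
  finally show ?thesis .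
qed

lemma fconj_Fenchel_Young: "ereal (x \<bullet> y) - v x \<le> fconj v y"
  unfolding fconj_def by (rule SUP_upper2[of x]) (simp_all add: lower_add_ereal_left minus_ereal_def)

lemma Eexp_Fenchel_Young:
  assumes g: "integrable M (\<lambda>w. F w \<bullet> Xs w)"
    and v: "(\<lambda>w. v (F w)) \<in> borel_measurable M" "\<And>y. 0 \<le> v y"
  shows "ereal (\<integral>w. F w \<bullet> Xs w \<partial>M) - Eexp M (\<lambda>w. v (F w)) \<le> Eexp M (\<lambda>w. fconj v (Xs w))"
proof (cases "Eexp M (\<lambda>w. v (F w)) = \<infinity>")
  case False
  then have "ereal (\<integral>w. F w \<bullet> Xs w \<partial>M) - Eexp M (\<lambda>w. v (F w))
      = Eexp M (\<lambda>w. ereal (F w \<bullet> Xs w) - v (F w))"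
    using v by (intro Eexp_integrable_diff[OF g v(1), symmetric]) auto
  also have "\<dots> \<le> Eexp M (\<lambda>w. fconj v (Xs w))"
    by (intro Eexp_mono fconj_Fenchel_Young)
  finally show ?thesis .
qed simp

lemma Bellman_value_dualized_constraint:
  fixes F :: "'u \<Rightarrow> 'a \<Rightarrow> real^'n::finite" and L :: "'u \<Rightarrow> 'a \<Rightarrow> ereal"
  assumes M: "finite_measure M" and p: "1 \<le> p" and F: "\<And>u. in_Lp p M (F u)"
    and L: "\<And>u. L u \<in> borel_measurable M" "\<And>u w. w \<in> space M \<Longrightarrow> 0 \<le> L u w"
    and v: "v \<in> borel_measurable borel" "\<And>y. 0 \<le> v y"
  shows "(INF u. Eexp M (\<lambda>w. upper_add (L u w) (v (F u w)))) =
    (INF X \<in> {X. in_Lp p M X}.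
      upper_add
        (INF u. SUP Xs \<in> {Xs. in_Lconj p M Xs}.
          lower_add (Eexp M (\<lambda>w. ereal (- X w \<bullet> Xs w))) (Eexp M (\<lambda>w. upper_add (L u w) (ereal (F u w \<bullet> Xs w)))))
        (Eexp M (\<lambda>w. v (X w))))"
    (is "?lhs = (INF X \<in> _. upper_add (INF u. ?S u X) (?EV X))")
proof -
  define P where "P u X = Eexp M (L u) + (if AE w in M. X w = F u w then 0 else \<infinity>)" for u X
  have S_eq: "?S u X = P u X" if "in_Lp p M X"
    for u and X :: "'a \<Rightarrow> real^'n"
    unfolding P_def by (rule SUP_Lconj_penalty[OF M p F that L])
  have EV_nonneg: "0 \<le> ?EV X" for X :: "'a \<Rightarrow> real^'n"
    using v(2) by (intro Eexp_nonneg)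
  have EL_nonneg: "0 \<le> Eexp M (L u)" for u
    using L(2) by (intro Eexp_nonneg)
  have split: "Eexp M (\<lambda>w. upper_add (L u w) (v (F u w))) = Eexp M (L u) + ?EV (F u)" for u
    unfolding upper_add_eq_plus
    using L v F[of u] by (intro Eexp_add_nonneg) (auto simp: in_Lp_def)
  show ?thesis
  proof (rule antisym)
    show "?lhs \<le> (INF X \<in> {X. in_Lp p M X}. upper_add (INF u. ?S u X) (?EV X))"
    proof (rule INF_greatest)
      fix X :: "'a \<Rightarrow> real^'n" assume X: "X \<in> {X. in_Lp p M X}"
      have "?lhs \<le> P u X + ?EV X" for u
      proof (cases "AE w in M. X w = F u w")
        case True
        then have "?EV (F u) = ?EV X"
          by (intro Eexp_cong_AE) auto
        moreover have "?lhs \<le> Eexp M (L u) + ?EV (F u)"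
          by (rule INF_lower2[of u]) (simp_all add: split)
        ultimately show ?thesis
          using True by (simp add: P_def)
      qed (simp add: P_def)
      then have "?lhs \<le> (INF u. P u X + ?EV X)"
        by (rule INF_greatest)
      also have "\<dots> = (INF u. P u X) + ?EV X"
        using EV_nonneg EL_nonneg by (intro INF_ereal_add_left) (auto simp: P_def)
      finally show "?lhs \<le> upper_add (INF u. ?S u X) (?EV X)"
        using X by (simp only: upper_add_eq_plus[of "INF u. P u X"] S_eq mem_Collect_eq)
    qed
    show "(INF X \<in> {X. in_Lp p M X}. upper_add (INF u. ?S u X) (?EV X)) \<le> ?lhs"
    proof (rule INF_greatest)
      fix u
      have "(INF X \<in> {X. in_Lp p M X}. upper_add (INF u. ?S u X) (?EV X))
          \<le> (INF u'. P u' (F u)) + ?EV (F u)"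
        using F[of u]
        by (intro INF_lower2[of "F u"]) (simp_all only: upper_add_eq_plus[of "INF u. P u _"] S_eq mem_Collect_eq)
      also have "\<dots> \<le> P u (F u) + ?EV (F u)"
        by (intro add_right_mono INF_lower) simp
      finally show "(INF X \<in> {X. in_Lp p M X}. upper_add (INF u. ?S u X) (?EV X))
          \<le> Eexp M (\<lambda>w. upper_add (L u w) (v (F u w)))"
        by (simp add: split P_def)
    qed
  qed
qed

lemma fconj_Bellman_value_le:
  fixes F :: "real^'n::finite \<Rightarrow> 'u \<Rightarrow> 'a \<Rightarrow> real^'n" and L :: "real^'n \<Rightarrow> 'u \<Rightarrow> 'a \<Rightarrow> ereal"
  assumes M: "finite_measure M" and p: "1 \<le> p" and F: "\<And>x u. in_Lp p M (F x u)"
    and L: "\<And>x u. L x u \<in> borel_measurable M" "\<And>x u w. w \<in> space M \<Longrightarrow> 0 \<le> L x u w"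
    and v: "v \<in> borel_measurable borel" "\<And>y. 0 \<le> v y"
    and g: "\<And>x. g x = (INF u. Eexp M (\<lambda>w. upper_add (L x u w) (v (F x u w))))"
    and Xs: "in_Lconj p M Xs"
  shows "fconj g xs \<le>
    upper_add
      (SUP u. SUP x. lower_add (ereal (x \<bullet> xs)) (- Eexp M (\<lambda>w. upper_add (L x u w) (ereal (F x u w \<bullet> Xs w)))))
      (Eexp M (\<lambda>w. fconj v (Xs w)))"
    (is "_ \<le> upper_add ?A ?B")
proof -
  have "ereal (x \<bullet> xs) - Eexp M (\<lambda>w. L x u w + v (F x u w)) \<le> ?A + ?B" for x u
  proof -
    define I where "I = (\<integral>w. F x u w \<bullet> Xs w \<partial>M)"
    have F_meas: "F x u \<in> borel_measurable M"
      using F by (simp add: in_Lp_def)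
    have split: "Eexp M (\<lambda>w. L x u w + v (F x u w)) = Eexp M (L x u) + Eexp M (\<lambda>w. v (F x u w))"
      using L v F_meas by (intro Eexp_add_nonneg) auto
    have A: "ereal (x \<bullet> xs) - (ereal I + Eexp M (L x u)) \<le> ?A"
      using Eexp_cost_plus_inner[OF M p F Xs L]
      by (intro SUP_upper2[of u] SUP_upper2[of x]) (simp_all add: I_def lower_add_ereal_left minus_ereal_def)
    have B: "ereal I - Eexp M (\<lambda>w. v (F x u w)) \<le> ?B"
      unfolding I_def using v F_meas
      by (intro Eexp_Fenchel_Young in_Lconj_integrable_inner[OF M p F Xs]) auto
    \<comment> \<open>also for infinite \<open>a\<close> or \<open>b\<close>: both sides are then \<open>-\<infinity>\<close>\<close>
    have "ereal c - (a + b) = (ereal c - (ereal I + a)) + (ereal I - b)" if "0 \<le> a" "0 \<le> b" for c a b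
      using that by (cases a; cases b) auto
    then have "ereal (x \<bullet> xs) - Eexp M (\<lambda>w. L x u w + v (F x u w))
        = (ereal (x \<bullet> xs) - (ereal I + Eexp M (L x u))) + (ereal I - Eexp M (\<lambda>w. v (F x u w)))"
      unfolding split using L(2) v(2) by (simp add: Eexp_nonneg)
    also have "\<dots> \<le> ?A + ?B"
      using A B by (rule add_mono)
    finally show ?thesis .
  qed
  then have "ereal (x \<bullet> xs) - (INF u. Eexp M (\<lambda>w. L x u w + v (F x u w))) \<le> ?A + ?B" for x
    by (subst SUP_ereal_minus_right[symmetric]) (auto intro: SUP_least)
  then show ?thesis
    unfolding fconj_def upper_add_eq_plus g by (intro SUP_least) (simp add: lower_add_ereal_left minus_ereal_def)
qed

lemma measurable_section_comp:
  fixes L :: "'x::second_countable_topology \<Rightarrow> 'y::second_countable_topology \<Rightarrow> 'z::second_countable_topology \<Rightarrow> ereal"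
  assumes L: "(\<lambda>(x, u, z). L x u z) \<in> borel_measurable borel" and Z: "Z \<in> borel_measurable M"
  shows "(\<lambda>w. L x u (Z w)) \<in> borel_measurable M"
proof -
  have "(\<lambda>w. (x, u, Z w)) \<in> measurable M (borel \<Otimes>\<^sub>M (borel \<Otimes>\<^sub>M borel))"
    using Z by measurable
  then have "(\<lambda>w. (x, u, Z w)) \<in> measurable M borel"
    by (simp add: borel_prod)
  from measurable_compose[OF this L] show ?thesis
    by simp
qed

theorem proposition5:
  fixes M :: "'a measure" and p :: real and T :: nat
    and W :: "nat \<Rightarrow> 'a \<Rightarrow> real^'k::finite"
    and f :: "nat \<Rightarrow> real^'n::finite \<Rightarrow> real^'m::finite \<Rightarrow> real^'k \<Rightarrow> real^'n"
    and L :: "nat \<Rightarrow> real^'n \<Rightarrow> real^'m \<Rightarrow> real^'k \<Rightarrow> ereal"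
    and \<Phi> :: "real^'n \<Rightarrow> ereal"
    and V :: "nat \<Rightarrow> real^'n \<Rightarrow> ereal"
  assumes prob: "prob_space M"
    and p: "1 \<le> p"
    and T: "1 \<le> T"
    and W_rv: "\<And>t. t \<in> {1..T} \<Longrightarrow> W t \<in> borel_measurable M"
    and f_Lp: "\<And>t x u. t < T \<Longrightarrow> in_Lp p M (\<lambda>w. f t x u (W (Suc t) w))"
    and L_nonneg: "\<And>t x u w. t < T \<Longrightarrow> 0 \<le> L t x u w"
    and L_meas: "\<And>t. t < T \<Longrightarrow> (\<lambda>(x, u, w). L t x u w) \<in> borel_measurable borel"
    and Phi_nonneg: "\<And>x. 0 \<le> \<Phi> x"
    and Phi_meas: "\<Phi> \<in> borel_measurable borel"
    and V_T: "V T = \<Phi>"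
    and V_def: "\<And>t x. t < T \<Longrightarrow> V t x =
        (INF XU \<in> admissible M T f W t x.
           Eexp M (\<lambda>w. upper_add (\<Sum>s\<in>{t..<T}. L s (fst XU s w) (snd XU s w) (W (Suc s) w))
                                 (\<Phi> (fst XU T w))))"
    and V_meas: "\<And>t. t \<le> T \<Longrightarrow> V t \<in> borel_measurable borel"
    and Bellman: "\<And>t x. t < T \<Longrightarrow> V t x =
        (INF u. Eexp M (\<lambda>w. upper_add (L t x u (W (Suc t) w)) (V (Suc t) (f t x u (W (Suc t) w)))))"
  shows "(\<forall>t<T. \<forall>x. V t x =
            (INF X \<in> {X. in_Lp p M X}.
               upper_add
                 (INF u. SUP Xs \<in> {Xs. in_Lconj p M Xs}.
                    lower_add (Eexp M (\<lambda>w. ereal (inner (- X w) (Xs w)))) (Ham M L f W t x u Xs))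
                 (Eexp M (\<lambda>w. V (Suc t) (X w)))))
       \<and> (\<forall>t<T. \<forall>xs. fconj (V t) xs \<le>
            (INF Xs \<in> {Xs. in_Lconj p M Xs}.
               upper_add
                 (SUP u. SUP x. lower_add (ereal (inner x xs)) (- Ham M L f W t x u Xs))
                 (Eexp M (\<lambda>w. fconj (V (Suc t)) (Xs w)))))"
proof -
  have M: "finite_measure M"
    using prob by (simp add: prob_space_def)
  have V_nonneg: "0 \<le> V s y" if "s \<le> T" for s y
  proof (cases "s = T")
    case False
    then have "s < T" using that by simp
    then show ?thesis
      unfolding V_def[OF \<open>s < T\<close>] upper_add_eq_plus
      using L_nonneg Phi_nonneg by (intro INF_greatest Eexp_nonneg add_nonneg_nonneg sum_nonneg) auto
  qed (simp add: V_T Phi_nonneg)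
  have cost_meas: "(\<lambda>w. L t x u (W (Suc t) w)) \<in> borel_measurable M" if "t < T" for t x u
    using that by (intro measurable_section_comp[OF L_meas W_rv]) auto
  show ?thesis
  proof (intro conjI allI impI, goal_cases)
    case (1 t x)
    then show ?case
      unfolding Bellman[OF 1] Ham_def
      by (intro Bellman_value_dualized_constraint[OF M p f_Lp[OF 1] cost_meas[OF 1] L_nonneg[OF 1]]
          V_meas V_nonneg) auto
  next
    case (2 t xs)
    then show ?case
      unfolding Ham_def
      by (intro INF_greatest fconj_Bellman_value_le[OF M p f_Lp[OF 2] cost_meas[OF 2] L_nonneg[OF 2]]
          V_meas V_nonneg Bellman[OF 2]) auto
  qed
qed

end
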